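(* Let $(X,d)$ be a complete metric space and let $\{T_i\}_{i\in\mathbb{N}}$ be a sequence of continuous maps $T_i:X\to X$, where each $T_i$ is a $\phi$-contraction with comparison function $\phi_i$ satisfying $\phi_i(t)<t$ for all $t>0$. Suppose there is $x_0\in X$ with $\sup_{i\in\mathbb{N}} d(T_i(x_0),x_0)<\infty$, and that $$\sum_{k=1}^{\infty}\phi_1\circ\phi_2\circ\cdots\circ\phi_k(t)<\infty\quad\text{for every } t>0.$$ Then there is a point $\bar x\in X$ such that for every initial point $x\in X$ the backward trajectory $\Psi_k(x)=T_1\circ T_2\circ\cdots\circ T_k(x)$ converges to $\bar x$ as $k\to\infty$.
   Context: A comparison function is a non-decreasing map $\phi:[0,\infty)\to[0,\infty)$ such that $\phi^p(t)\to 0$ as $p\to\infty$ for every $t\ge 0$, where $\phi^p$ denotes the $p$-fold composition of $\phi$. A map $T:X\to X$ is a $\phi$-contraction with comparison function $\phi$ if $d(T(x),T(y))\le\phi(d(x,y))$ for all $x,y\in X$. *)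

theory Defs
  imports "HOL-Analysis.Analysis"
begin

definition comparison_function :: "(real \<Rightarrow> real) \<Rightarrow> bool" where
  "comparison_function \<phi> \<longleftrightarrow>
     (\<forall>t\<ge>0. \<phi> t \<ge> 0) \<and>
     mono_on {0..} \<phi> \<and>
     (\<forall>t\<ge>0. (\<lambda>p. (\<phi> ^^ p) t) \<longlonglongrightarrow> 0)"

definition phi_contraction :: "('a::metric_space \<Rightarrow> 'a) \<Rightarrow> (real \<Rightarrow> real) \<Rightarrow> bool" where
  "phi_contraction T \<phi> \<longleftrightarrow> comparison_function \<phi> \<and> (\<forall>x y. dist (T x) (T y) \<le> \<phi> (dist x y))"

text \<open>Forward composition of a 1-indexed family: comp_upto f k = f 1 \<circ> f 2 \<circ> ... \<circ> f k
  (identity for k = 0).\<close>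
definition comp_upto :: "(nat \<Rightarrow> 'b \<Rightarrow> 'b) \<Rightarrow> nat \<Rightarrow> 'b \<Rightarrow> 'b" where
  "comp_upto f k = foldr (\<circ>) (map f [1..<k+1]) id"

end

theory Submission
  imports Defs
begin

(* The backward composition Psi k = T 1 o ... o T k is a (Phi k)-contraction for
   Phi k = phi 1 o ... o phi k.  Since Psi (k+1) x0 = Psi k (T (k+1) x0) and d(T i x0, x0) <= M
   uniformly, consecutive points of the orbit Psi k x0 are at distance at most Phi k M, which is
   summable; so the orbit is Cauchy and converges to some xbar.  For any other x,
   d(Psi k x, Psi k x0) <= Phi k (d(x, x0)) is the general term of a convergent series, hence
   tends to 0. *)

lemma comp_upto_0 [simp]: "comp_upto f 0 = id"
  unfolding comp_upto_def by simp

lemma comp_upto_Suc: "comp_upto f (Suc k) = comp_upto f k \<circ> f (Suc k)"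
proof -
  have "foldr (\<circ>) (xs @ [g]) id = foldr (\<circ>) xs id \<circ> g" for xs :: "('b \<Rightarrow> 'b) list" and g
    by (induction xs) auto
  moreover have "[1..<Suc k + 1] = [1..<k + 1] @ [Suc k]"
    by simp
  ultimately show ?thesis
    unfolding comp_upto_def by (simp only: map_append list.map)
qed

lemma comparison_function_nonneg: "comparison_function \<phi> \<Longrightarrow> t \<ge> 0 \<Longrightarrow> \<phi> t \<ge> 0"
  unfolding comparison_function_def by simp

lemma comparison_function_mono: "comparison_function \<phi> \<Longrightarrow> 0 \<le> s \<Longrightarrow> s \<le> t \<Longrightarrow> \<phi> s \<le> \<phi> t"
  unfolding comparison_function_def by (simp add: mono_on_def)

lemma comp_upto_comparison_mono:
  assumes "\<And>i. i \<ge> 1 \<Longrightarrow> comparison_function (\<phi> i)" and "0 \<le> s" "s \<le> t"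
  shows "comp_upto \<phi> k s \<le> comp_upto \<phi> k t"
  using \<open>0 \<le> s\<close> \<open>s \<le> t\<close>
proof (induction k arbitrary: s t)
  case (Suc k)
  have "comparison_function (\<phi> (Suc k))"
    using assms(1) by simp
  then have "0 \<le> \<phi> (Suc k) s" "\<phi> (Suc k) s \<le> \<phi> (Suc k) t"
    using Suc.prems comparison_function_nonneg comparison_function_mono by blast+
  then show ?case
    using Suc.IH by (simp add: comp_upto_Suc)
qed simp

lemma dist_comp_upto_le:
  assumes "\<And>i. i \<ge> 1 \<Longrightarrow> phi_contraction (T i) (\<phi> i)"
  shows "dist (comp_upto T k x) (comp_upto T k y) \<le> comp_upto \<phi> k (dist x y)"
proof (induction k arbitrary: x y)
  case (Suc k)
  have cf: "\<And>i. i \<ge> 1 \<Longrightarrow> comparison_function (\<phi> i)"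
    using assms phi_contraction_def by blast
  have "dist (comp_upto T (Suc k) x) (comp_upto T (Suc k) y)
      \<le> comp_upto \<phi> k (dist (T (Suc k) x) (T (Suc k) y))"
    using Suc.IH by (simp add: comp_upto_Suc)
  also have "\<dots> \<le> comp_upto \<phi> k (\<phi> (Suc k) (dist x y))"
    using assms[of "Suc k"] unfolding phi_contraction_def
    by (intro comp_upto_comparison_mono[OF cf]) simp_all
  finally show ?case
    by (simp add: comp_upto_Suc)
qed simp

lemma dist_le_sum_dist_Suc:
  fixes s :: "nat \<Rightarrow> 'a::metric_space"
  assumes "m \<le> n"
  shows "dist (s m) (s n) \<le> (\<Sum>k = m..<n. dist (s (Suc k)) (s k))"
  using assms
proof (induction n rule: dec_induct)
  case (step n)
  have "dist (s m) (s (Suc n)) \<le> dist (s m) (s n) + dist (s (Suc n)) (s n)"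
    by (metis dist_commute dist_triangle)
  with step show ?case
    by simp
qed simp

lemma Cauchy_if_summable_dist_Suc:
  fixes s :: "nat \<Rightarrow> 'a::metric_space"
  assumes "summable (\<lambda>k. dist (s (Suc k)) (s k))"
  shows "Cauchy s"
proof (rule metric_CauchyI)
  fix e :: real
  assume "e > 0"
  then obtain N where N: "\<And>m n. m \<ge> N \<Longrightarrow> (\<Sum>k = m..<n. dist (s (Suc k)) (s k)) < e"
    using assms unfolding summable_Cauchy by (fastforce simp: sum_nonneg)
  have "dist (s m) (s n) < e" if "m \<ge> N" "n \<ge> N" "m \<le> n" for m n
    using dist_le_sum_dist_Suc[OF \<open>m \<le> n\<close>, of s] N[OF \<open>m \<ge> N\<close>, of n] by simp
  then have "dist (s m) (s n) < e" if "m \<ge> N" "n \<ge> N" for m n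
    using that by (metis dist_commute nat_le_linear)
  then show "\<exists>M. \<forall>m\<ge>M. \<forall>n\<ge>M. dist (s m) (s n) < e"
    by blast
qed

lemma Lim_transform_dist:
  fixes f g :: "'b \<Rightarrow> 'a::metric_space"
  assumes "(g \<longlongrightarrow> a) F" and "((\<lambda>x. dist (f x) (g x)) \<longlongrightarrow> 0) F"
  shows "(f \<longlongrightarrow> a) F"
proof -
  have "((\<lambda>x. dist (g x) a) \<longlongrightarrow> 0) F"
    using assms(1) tendsto_dist_iff by blast
  with assms(2) have "((\<lambda>x. dist (f x) (g x) + dist (g x) a) \<longlongrightarrow> 0) F"
    by (rule tendsto_add_zero)
  then have "((\<lambda>x. dist (f x) a) \<longlongrightarrow> 0) F"
    by (rule tendsto_sandwich[OF _ _ tendsto_const, rotated 2]) (simp_all add: dist_triangle)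
  then show ?thesis
    using tendsto_dist_iff by blast
qed

lemma Cauchy_backward_orbit:
  fixes T :: "nat \<Rightarrow> 'a::metric_space \<Rightarrow> 'a"
  assumes contr: "\<And>i. i \<ge> 1 \<Longrightarrow> phi_contraction (T i) (\<phi> i)"
    and bound: "\<And>i. i \<ge> 1 \<Longrightarrow> dist (T i x0) x0 \<le> M"
    and summ: "summable (\<lambda>k. comp_upto \<phi> (Suc k) M)"
  shows "Cauchy (\<lambda>k. comp_upto T k x0)"
proof (rule Cauchy_if_summable_dist_Suc)
  let ?s = "\<lambda>k. comp_upto T k x0"
  have cf: "\<And>i. i \<ge> 1 \<Longrightarrow> comparison_function (\<phi> i)"
    using contr phi_contraction_def by blast
  have "dist (?s (Suc k)) (?s k) \<le> comp_upto \<phi> k M" for k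
  proof -
    have "dist (?s (Suc k)) (?s k) \<le> comp_upto \<phi> k (dist (T (Suc k) x0) x0)"
      using dist_comp_upto_le[OF contr] by (simp add: comp_upto_Suc)
    also have "\<dots> \<le> comp_upto \<phi> k M"
      using bound[of "Suc k"] by (intro comp_upto_comparison_mono[OF cf]) simp_all
    finally show ?thesis .
  qed
  then have "summable (\<lambda>k. dist (?s (Suc (Suc k))) (?s (Suc k)))"
    by (intro summable_comparison_test[OF _ summ]) auto
  then show "summable (\<lambda>k. dist (?s (Suc k)) (?s k))"
    by (rule summable_Suc_iff[THEN iffD1])
qed

theorem proposition3p11:
  fixes T :: "nat \<Rightarrow> 'a::complete_space \<Rightarrow> 'a"
    and \<phi> :: "nat \<Rightarrow> real \<Rightarrow> real"
    and x0 :: 'a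
  assumes cont: "\<And>i. i \<ge> 1 \<Longrightarrow> continuous_on UNIV (T i)"
    and contr: "\<And>i. i \<ge> 1 \<Longrightarrow> phi_contraction (T i) (\<phi> i)"
    and less: "\<And>i t. i \<ge> 1 \<Longrightarrow> t > 0 \<Longrightarrow> \<phi> i t < t"
    and bdd: "bdd_above {dist (T i x0) x0 | i. i \<ge> 1}"
    and summ: "\<And>t. t > 0 \<Longrightarrow> summable (\<lambda>k. comp_upto \<phi> (Suc k) t)"
  shows "\<exists>xbar. \<forall>x. (\<lambda>k. comp_upto T k x) \<longlonglongrightarrow> xbar"
proof -
  obtain B where "\<And>i. i \<ge> 1 \<Longrightarrow> dist (T i x0) x0 \<le> B"
    using bdd unfolding bdd_above_def by blast
  then have "\<And>i. i \<ge> 1 \<Longrightarrow> dist (T i x0) x0 \<le> max B 1"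
    by (meson max.coboundedI1)
  from Cauchy_backward_orbit[OF contr this summ] have "Cauchy (\<lambda>k. comp_upto T k x0)"
    by simp
  then obtain xbar where xbar: "(\<lambda>k. comp_upto T k x0) \<longlonglongrightarrow> xbar"
    using Cauchy_convergent_iff convergent_def by blast
  have "(\<lambda>k. comp_upto T k x) \<longlonglongrightarrow> xbar" for x
  proof (cases "x = x0")
    case False
    then have "(\<lambda>k. comp_upto \<phi> (Suc k) (dist x x0)) \<longlonglongrightarrow> 0"
      using summ[of "dist x x0"] summable_LIMSEQ_zero by simp
    then have "(\<lambda>k. comp_upto \<phi> k (dist x x0)) \<longlonglongrightarrow> 0"
      by (rule LIMSEQ_imp_Suc)
    then have "(\<lambda>k. dist (comp_upto T k x) (comp_upto T k x0)) \<longlonglongrightarrow> 0"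
      by (rule tendsto_sandwich[OF _ _ tendsto_const, rotated 2])
         (simp_all add: dist_comp_upto_le[OF contr])
    then show ?thesis
      by (rule Lim_transform_dist[OF xbar])
  qed (use xbar in simp)
  then show ?thesis
    by blast
qed

end
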